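(* There exists a family $(R(m,d))_{m,d\in\mathbb{N}}$, where $R(m,d)$ is a graph on vertex set $\{0,1\}^d\times[m]$, such that for every $d\in\mathbb{N}$ and $\varepsilon>0$, for all sufficiently large $m$: (i) for every $\ell\in[d]$, $(1-\varepsilon)2^{d-1}m^2\le e_\ell(R(m,d))\le(1+\varepsilon)2^{d-1}m^2$, and hence $(1-\varepsilon)d2^{d-1}m^2\le e(R(m,d))\le(1+\varepsilon)d2^{d-1}m^2$; (ii) for all distinct $x,y\in\{0,1\}^d$ and all $P\subseteq B_x$, $Q\subseteq B_y$ each of size at least $m^{2/3}$, the number of edges of $R(m,d)$ between $P$ and $Q$ is at most $(1+\varepsilon)2^{-d+\delta(x,y)}|P||Q|$.
   Context: For distinct $x,y\in\{0,1\}^d$, $\delta(x,y)=\min\{i: x_i\ne y_i\}$. For $x\in\{0,1\}^d$ the block $B_x$ is $\{x\}\times[m]$. An edge of a graph on $\{0,1\}^d\times[m]$ joining a vertex of $B_x$ to a vertex of $B_y$ with $\delta(x,y)=\ell$ is a level-$\ell$ edge, and $e_\ell(G)$ denotes the number of level-$\ell$ edges of $G$. *)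

theory Defs
  imports Complex_Main
begin

text \<open>Vertices of the blown-up cube: pairs (x, i) where x is a 0/1-string of length d
  (a bool list, coordinate k of the paper is the list entry k-1) and i \<in> [m] = {1..m}.\<close>
type_synonym vert = "bool list \<times> nat"

definition verts :: "nat \<Rightarrow> nat \<Rightarrow> vert set" where
  "verts m d = {(x, i). length x = d \<and> i \<in> {1..m}}"

definition is_graph_on :: "vert set \<Rightarrow> vert set set \<Rightarrow> bool" where
  "is_graph_on V E \<longleftrightarrow> (\<forall>e\<in>E. \<exists>u v. u \<in> V \<and> v \<in> V \<and> u \<noteq> v \<and> e = {u, v})"

definition delta :: "bool list \<Rightarrow> bool list \<Rightarrow> nat" where
  "delta x y = Min {i \<in> {1..length x}. x ! (i - 1) \<noteq> y ! (i - 1)}"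

definition block :: "nat \<Rightarrow> bool list \<Rightarrow> vert set" where
  "block m x = {x} \<times> {1..m}"

definition level_edges :: "nat \<Rightarrow> vert set set \<Rightarrow> nat" where
  "level_edges l E = card {e \<in> E. \<exists>u v. e = {u, v} \<and> fst u \<noteq> fst v \<and> delta (fst u) (fst v) = l}"

definition edges_between :: "vert set set \<Rightarrow> vert set \<Rightarrow> vert set \<Rightarrow> nat" where
  "edges_between E P Q = card {e \<in> E. \<exists>u\<in>P. \<exists>v\<in>Q. e = {u, v}}"

end

theory Submission
  imports Defs "HOL-Analysis.Convex" "HOL-Library.Log_Nat" "HOL-Real_Asymp.Real_Asymp"
begin

text \<open>Between blocks \<open>B\<^sub>x\<close> and \<open>B\<^sub>y\<close> with \<open>\<delta>(x, y) = l\<close> we put a bipartite graph of density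
  \<open>2^(l - d)\<close>: reading \<open>i, j \<in> [m]\<close> as binary words of length \<open>n = floorlog 2 m\<close>, the vertices
  \<open>(x, i)\<close> and \<open>(y, j)\<close> are adjacent iff the \<open>k = d - l\<close> bilinear forms \<open>\<Sum>\<^sub>p i\<^sub>p j\<^sub>p\<^sub>+\<^sub>t\<close>,
  \<open>t < k\<close>, all vanish mod 2. The indicator of this event is \<open>2^-k\<close> times a sum of characters
  \<open>(-1)^(i\<^sup>T A\<^sub>S j)\<close> over \<open>S \<subseteq> {0..<k}\<close>. The term \<open>S = {}\<close> gives the expected count
  \<open>|P| |Q| / 2^k\<close>; for \<open>S \<noteq> {}\<close> the matrix \<open>A\<^sub>S\<close> is triangular of full rank, so Lindsey's lemma
  bounds the character sum by \<open>sqrt (2^(n+k) |P| |Q|) \<le> sqrt (2^(d+1) m |P| |Q|)\<close>, an \<open>\<epsilon>\<close>-fraction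
  of the main term once \<open>|P| |Q| \<ge> m^(4/3)\<close> and \<open>m\<close> is large. Each pair of blocks is joined only
  once, from the word having a 0 at position \<open>\<delta>\<close>; there are \<open>2^(2d - l - 1)\<close> such pairs at level
  \<open>l\<close>, whence \<open>e\<^sub>l \<approx> 2^(2d - l - 1) m\<^sup>2 2^(l - d) = 2^(d - 1) m\<^sup>2\<close>.\<close>

section \<open>Characters of shift matrices\<close>

definition sign :: "bool \<Rightarrow> real" where
  "sign b = (if b then -1 else 1)"

text \<open>For \<open>S \<subseteq> {..<k}\<close>, \<open>shift_char n S u B = (-1)^(u\<^sup>T A 1\<^sub>B)\<close> where \<open>A\<close> is the \<open>n \<times> (n + k)\<close> matrix
  over GF(2) with \<open>A p q = [q - p \<in> S]\<close>; the word \<open>u\<close> is given by its bits, the word \<open>1\<^sub>B\<close> by its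
  support.\<close>
definition shift_char :: "nat \<Rightarrow> nat set \<Rightarrow> (nat \<Rightarrow> bool) \<Rightarrow> nat set \<Rightarrow> real" where
  "shift_char n S u B = (\<Prod>t\<in>S. \<Prod>p<n. sign (u p \<and> p + t \<in> B))"

lemma shift_char_mult:
  "shift_char n S u B * shift_char n S v B = shift_char n S (\<lambda>p. u p \<noteq> v p) B"
  unfolding shift_char_def prod.distrib[symmetric]
  by (intro prod.cong refl) (auto simp: sign_def)

lemma shift_char_zero_word: "shift_char n S (\<lambda>p. False) B = 1"
  unfolding shift_char_def by (simp add: sign_def)

text \<open>Toggling \<open>q\<^sub>0 = p\<^sub>1 + Min S\<close>, where \<open>p\<^sub>1\<close> is the least set bit of \<open>w\<close>, flips exactly one
  factor of \<open>shift_char\<close>: every other factor with \<open>w p\<close> looks at a position \<open>p + t > q\<^sub>0\<close>.\<close>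
lemma sum_shift_char_eq_0:
  assumes "finite S" "S \<noteq> {}" "S \<subseteq> {..<k}" "p\<^sub>0 < n" "w p\<^sub>0"
  shows "(\<Sum>B\<in>Pow {..<n + k}. shift_char n S w B) = 0"
proof -
  define p\<^sub>1 where "p\<^sub>1 = (LEAST p. w p)"
  define t\<^sub>0 where "t\<^sub>0 = Min S"
  define q\<^sub>0 where "q\<^sub>0 = p\<^sub>1 + t\<^sub>0"
  have "w p\<^sub>1" "p\<^sub>1 \<le> p\<^sub>0"
    unfolding p\<^sub>1_def using assms(5) by (auto intro: LeastI Least_le)
  have "t\<^sub>0 \<in> S" and t\<^sub>0_le: "\<And>t. t \<in> S \<Longrightarrow> t\<^sub>0 \<le> t"
    unfolding t\<^sub>0_def using assms(1,2) by auto
  have q\<^sub>0: "q\<^sub>0 < n + k"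
    unfolding q\<^sub>0_def using \<open>p\<^sub>1 \<le> p\<^sub>0\<close> \<open>t\<^sub>0 \<in> S\<close> assms(3,4) by auto
  define toggle where "toggle B = (if q\<^sub>0 \<in> B then B - {q\<^sub>0} else insert q\<^sub>0 B)" for B
  define I where "I = S \<times> {..<n} - {(t\<^sub>0, p\<^sub>1)}"
  have split: "shift_char n S w B = sign (q\<^sub>0 \<in> B) * (\<Prod>(t, p)\<in>I. sign (w p \<and> p + t \<in> B))" for B
  proof -
    have "(t\<^sub>0, p\<^sub>1) \<in> S \<times> {..<n}"
      using \<open>t\<^sub>0 \<in> S\<close> \<open>p\<^sub>1 \<le> p\<^sub>0\<close> assms(4) by auto
    then show ?thesis
      unfolding shift_char_def prod.cartesian_product I_def
      using prod.remove[of "S \<times> {..<n}" "(t\<^sub>0, p\<^sub>1)" "\<lambda>(t, p). sign (w p \<and> p + t \<in> B)"]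
        assms(1) \<open>w p\<^sub>1\<close>
      by (simp add: q\<^sub>0_def add.commute)
  qed
  have others: "(\<Prod>(t, p)\<in>I. sign (w p \<and> p + t \<in> toggle B)) = (\<Prod>(t, p)\<in>I. sign (w p \<and> p + t \<in> B))"
    for B
  proof (intro prod.cong refl)
    fix z assume "z \<in> I"
    then obtain t p where z: "z = (t, p)" "t \<in> S" "(t, p) \<noteq> (t\<^sub>0, p\<^sub>1)"
      unfolding I_def by auto
    have "p + t \<noteq> q\<^sub>0" if "w p"
      using Least_le[of w p, OF that] t\<^sub>0_le[OF \<open>t \<in> S\<close>] z(3)
      unfolding q\<^sub>0_def p\<^sub>1_def by auto
    then show "(case z of (t, p) \<Rightarrow> sign (w p \<and> p + t \<in> toggle B)) =
        (case z of (t, p) \<Rightarrow> sign (w p \<and> p + t \<in> B))"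
      unfolding z toggle_def by (cases "w p") auto
  qed
  have flip: "shift_char n S w (toggle B) = - shift_char n S w B" for B
    unfolding split others by (simp add: toggle_def sign_def)
  have "(\<Sum>B\<in>Pow {..<n + k}. shift_char n S w (toggle B)) = (\<Sum>B\<in>Pow {..<n + k}. shift_char n S w B)"
    by (rule sum.reindex_bij_witness[of _ toggle toggle]) (use q\<^sub>0 in \<open>auto simp: toggle_def\<close>)
  then show ?thesis
    unfolding flip by (simp add: sum_negf)
qed

lemma not_bit_ge_if_less_power: "(i::nat) < 2 ^ n \<Longrightarrow> n \<le> p \<Longrightarrow> \<not> bit i p"
  by (metis bit_take_bit_iff take_bit_nat_eq_self_iff not_le)

lemma sum_square_shift_char:
  assumes "P \<subseteq> {..<(2::nat) ^ n}" "finite S" "S \<noteq> {}" "S \<subseteq> {..<k}"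
  shows "(\<Sum>B\<in>Pow {..<n + k}. (\<Sum>i\<in>P. shift_char n S (bit i) B)\<^sup>2) = card P * 2 ^ (n + k)"
proof -
  have orthogonal: "(\<Sum>B\<in>Pow {..<n + k}. shift_char n S (bit i) B * shift_char n S (bit i') B)
      = (if i = i' then 2 ^ (n + k) else 0)" if "i \<in> P" "i' \<in> P" for i i'
  proof (cases "i = i'")
    case True
    then show ?thesis
      by (simp add: shift_char_mult shift_char_zero_word card_Pow)
  next
    case False
    then obtain p where "bit i p \<noteq> bit i' p"
      using bit_eq_iff by blast
    moreover have "p < n"
      using calculation that assms(1) not_bit_ge_if_less_power[of _ n p] by (meson lessThan_iff not_le subsetD)
    ultimately show ?thesis
      using False sum_shift_char_eq_0[OF assms(2-4), of p n] by (simp add: shift_char_mult)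
  qed
  have "(\<Sum>B\<in>Pow {..<n + k}. (\<Sum>i\<in>P. shift_char n S (bit i) B)\<^sup>2)
      = (\<Sum>i\<in>P. \<Sum>i'\<in>P. \<Sum>B\<in>Pow {..<n + k}. shift_char n S (bit i) B * shift_char n S (bit i') B)"
    by (simp add: power2_eq_square sum_product sum.swap[of _ "Pow _"])
  also have "\<dots> = (\<Sum>i\<in>P. \<Sum>i'\<in>P. if i = i' then 2 ^ (n + k) else 0)"
    by (intro sum.cong refl) (simp add: orthogonal)
  also have "\<dots> = card P * 2 ^ (n + k)"
    using finite_subset[OF assms(1)] by simp
  finally show ?thesis .
qed

text \<open>Lindsey's lemma for the matrix \<open>A\<close>: Cauchy--Schwarz over the words \<open>j \<in> Q\<close>, then extend
  the sum of squares to all words of length \<open>n + k\<close>.\<close>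
lemma abs_sum_shift_char_le:
  assumes "P \<subseteq> {..<(2::nat) ^ n}" "Q \<subseteq> {..<(2::nat) ^ n}" "finite S" "S \<noteq> {}" "S \<subseteq> {..<k}"
  shows "\<bar>\<Sum>i\<in>P. \<Sum>j\<in>Q. shift_char n S (bit i) {q. bit j q}\<bar> \<le> sqrt (2 ^ (n + k) * card P * card Q)"
proof -
  define a where "a B = (\<Sum>i\<in>P. shift_char n S (bit i) B)" for B
  define supp where "supp j = {q. bit j q}" for j :: nat
  have "inj_on supp Q"
    unfolding inj_on_def supp_def by (metis bit_eq_iff mem_Collect_eq)
  have supp_Q: "supp ` Q \<subseteq> Pow {..<n + k}"
    using assms(2) not_bit_ge_if_less_power[of _ n] unfolding supp_def
    by (auto simp: subset_iff) (meson lessThan_iff not_le trans_less_add1)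
  have "(\<Sum>j\<in>Q. a (supp j))\<^sup>2 \<le> (\<Sum>j\<in>Q. (a (supp j))\<^sup>2) * card Q"
    by (rule sum_squared_le_sum_of_squares)
  also have "(\<Sum>j\<in>Q. (a (supp j))\<^sup>2) = (\<Sum>B\<in>supp ` Q. (a B)\<^sup>2)"
    using sum.reindex[OF \<open>inj_on supp Q\<close>, of "\<lambda>B. (a B)\<^sup>2"] by simp
  also have "\<dots> \<le> (\<Sum>B\<in>Pow {..<n + k}. (a B)\<^sup>2)"
    by (rule sum_mono2[OF _ supp_Q]) auto
  also have "\<dots> = card P * 2 ^ (n + k)"
    unfolding a_def by (rule sum_square_shift_char[OF assms(1,3-5)])
  finally have "(\<Sum>j\<in>Q. a (supp j))\<^sup>2 \<le> 2 ^ (n + k) * card P * card Q"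
    by (simp add: mult_right_mono algebra_simps)
  then have "\<bar>\<Sum>j\<in>Q. a (supp j)\<bar> \<le> sqrt (2 ^ (n + k) * card P * card Q)"
    by (metis power2_abs real_le_rsqrt)
  then show ?thesis
    unfolding a_def supp_def sum.swap[of _ P] .
qed

definition shift_adj :: "nat \<Rightarrow> nat \<Rightarrow> nat \<Rightarrow> nat \<Rightarrow> bool" where
  "shift_adj n k i j \<longleftrightarrow> (\<forall>t<k. even (card {p. p < n \<and> bit i p \<and> bit j (p + t)}))"

lemma prod_sign_eq_neg_one_power: "finite A \<Longrightarrow> (\<Prod>p\<in>A. sign (f p)) = (-1) ^ card {p\<in>A. f p}"
proof -
  assume "finite A"
  have "sign b = (-1) ^ of_bool b" for b
    by (simp add: sign_def)
  then have "(\<Prod>p\<in>A. sign (f p)) = (-1) ^ (\<Sum>p\<in>A. of_bool (f p))"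
    by (simp add: power_sum)
  also have "(\<Sum>p\<in>A. of_bool (f p)) = card {p\<in>A. f p}"
    using \<open>finite A\<close> by (simp add: Collect_conj_eq Int_commute)
  finally show ?thesis .
qed

lemma prod_parity_indicator:
  "finite A \<Longrightarrow> (\<Prod>t\<in>A. ((-1) ^ e t + 1) / 2) = (of_bool (\<forall>t\<in>A. even (e t)) :: real)"
  by (induction A rule: finite_induct) (auto simp: minus_one_power_iff)

lemma of_bool_shift_adj:
  "of_bool (shift_adj n k i j) = (\<Sum>S\<in>Pow {..<k}. shift_char n S (bit i) {q. bit j q}) / 2 ^ k"
proof -
  define c where "c t = (-1 :: real) ^ card {p. p < n \<and> bit i p \<and> bit j (p + t)}" for t
  have "of_bool (shift_adj n k i j) = (\<Prod>t<k. (c t + 1) / 2)"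
    unfolding c_def shift_adj_def by (auto simp: prod_parity_indicator)
  also have "\<dots> = (\<Prod>t<k. c t + 1) / 2 ^ k"
    by (simp add: prod_dividef)
  also have "(\<Prod>t<k. c t + 1) = (\<Sum>S\<in>Pow {..<k}. \<Prod>t\<in>S. c t)"
    by (simp add: prod_add)
  also have "\<dots> = (\<Sum>S\<in>Pow {..<k}. shift_char n S (bit i) {q. bit j q})"
    unfolding c_def shift_char_def by (simp add: prod_sign_eq_neg_one_power)
  finally show ?thesis .
qed

lemma card_shift_adj_deviation:
  assumes "P \<subseteq> {..<(2::nat) ^ n}" "Q \<subseteq> {..<(2::nat) ^ n}"
  shows "\<bar>real (card {(i, j)\<in>P \<times> Q. shift_adj n k i j}) - card P * card Q / 2 ^ k\<bar>
    \<le> sqrt (2 ^ (n + k) * card P * card Q)"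
proof -
  have "finite P" "finite Q"
    using assms finite_subset by blast+
  define g where "g S = (\<Sum>i\<in>P. \<Sum>j\<in>Q. shift_char n S (bit i) {q. bit j q})" for S
  define D where "D = sqrt (2 ^ (n + k) * card P * card Q)"
  have "real (card {(i, j)\<in>P \<times> Q. shift_adj n k i j})
      = (\<Sum>z\<in>P \<times> Q. of_bool (case z of (i, j) \<Rightarrow> shift_adj n k i j))"
    using \<open>finite P\<close> \<open>finite Q\<close> by (subst sum_of_bool_eq) (auto intro: arg_cong[where f = card])
  also have "\<dots> = (\<Sum>i\<in>P. \<Sum>j\<in>Q. of_bool (shift_adj n k i j))"
    by (simp add: sum.cartesian_product case_prod_unfold)
  also have "\<dots> = (\<Sum>S\<in>Pow {..<k}. g S) / 2 ^ k"
    unfolding of_bool_shift_adj g_def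
    by (simp add: sum_divide_distrib[symmetric] sum.swap[of _ "Pow _"])
  also have "(\<Sum>S\<in>Pow {..<k}. g S) = g {} + (\<Sum>S\<in>Pow {..<k} - {{}}. g S)"
    by (rule sum.remove) auto
  also have "g {} = card P * card Q"
    unfolding g_def shift_char_def by simp
  finally have deviation: "real (card {(i, j)\<in>P \<times> Q. shift_adj n k i j}) - card P * card Q / 2 ^ k
      = (\<Sum>S\<in>Pow {..<k} - {{}}. g S) / 2 ^ k"
    by (simp add: add_divide_distrib)
  have "\<bar>\<Sum>S\<in>Pow {..<k} - {{}}. g S\<bar> \<le> (\<Sum>S\<in>Pow {..<k} - {{}}. D)"
  proof (rule order_trans[OF sum_abs sum_mono])
    fix S assume "S \<in> Pow {..<k} - {{}}"
    then show "\<bar>g S\<bar> \<le> D"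
      unfolding g_def D_def using abs_sum_shift_char_le[OF assms, of S k] finite_subset[of S "{..<k}"]
      by auto
  qed
  also have "\<dots> \<le> 2 ^ k * D"
    unfolding D_def by (simp add: card_Pow mult_right_mono)
  finally show ?thesis
    unfolding deviation D_def by (simp add: field_simps)
qed

lemma two_power_floorlog_le: "0 < m \<Longrightarrow> 2 ^ floorlog 2 m \<le> 2 * m"
  using floorlog_bounds[of m 2] by (cases "floorlog 2 m") auto

lemma card_shift_adj_approx:
  fixes \<epsilon> :: real
  assumes "0 < m" "P \<subseteq> {1..m}" "Q \<subseteq> {1..m}" "k \<le> d" "0 \<le> \<epsilon>"
    and large: "2 ^ (3 * d + 1) * real m \<le> \<epsilon>\<^sup>2 * (real (card P) * real (card Q))"
  shows "\<bar>real (card {(i, j) \<in> P \<times> Q. shift_adj (floorlog 2 m) k i j}) - card P * card Q / 2 ^ k\<bar>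
    \<le> \<epsilon> * card P * card Q / 2 ^ k"
proof -
  define n where "n = floorlog 2 m"
  define N where "N = real (card P * card Q)"
  have "m < 2 ^ n"
    unfolding n_def using floorlog_bounds[of m 2] assms(1) by simp
  then have "P \<subseteq> {..<2 ^ n}" "Q \<subseteq> {..<2 ^ n}"
    using assms(2,3) by auto
  then have deviation: "\<bar>real (card {(i, j) \<in> P \<times> Q. shift_adj n k i j}) - N / 2 ^ k\<bar>
      \<le> sqrt (2 ^ (n + k) * N)"
    unfolding N_def using card_shift_adj_deviation by (simp add: mult.assoc)
  have "2 ^ (n + k) * N * (2 ^ k)\<^sup>2 = real (2 ^ n) * (2 ^ k) ^ 3 * N"
    by (simp add: power_add power2_eq_square power3_eq_cube)
  also have "\<dots> \<le> (2 * real m) * (2 ^ d) ^ 3 * N"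
  proof (intro mult_mono power_mono)
    show "real (2 ^ n) \<le> 2 * real m"
      unfolding n_def using two_power_floorlog_le[OF assms(1)] by linarith
  qed (use assms(4) in \<open>simp_all add: N_def\<close>)
  also have "\<dots> = 2 ^ (3 * d + 1) * real m * N"
    by (simp add: power_add mult.commute flip: power_mult)
  also have "\<dots> \<le> \<epsilon>\<^sup>2 * N * N"
    using large unfolding N_def by (simp add: mult_right_mono)
  finally have "2 ^ (n + k) * N \<le> (\<epsilon> * N / 2 ^ k)\<^sup>2"
    by (simp add: field_simps power2_eq_square)
  then have "sqrt (2 ^ (n + k) * N) \<le> \<epsilon> * N / 2 ^ k"
    using assms(5) by (simp add: real_le_lsqrt N_def)
  with deviation show ?thesis
    unfolding n_def N_def by simp
qed

section \<open>Blocks and levels\<close>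

lemma
  assumes "length x = length y" "x \<noteq> y"
  shows delta_in_range: "delta x y \<in> {1..length x}"
    and nth_delta_neq: "x ! (delta x y - 1) \<noteq> y ! (delta x y - 1)"
    and nth_eq_below_delta: "i < delta x y - 1 \<Longrightarrow> x ! i = y ! i"
proof -
  define D where "D = {i \<in> {1..length x}. x ! (i - 1) \<noteq> y ! (i - 1)}"
  obtain j where "j < length x" "x ! j \<noteq> y ! j"
    using assms nth_equalityI by blast
  then have "Suc j \<in> D"
    unfolding D_def by auto
  then have "delta x y \<in> D"
    unfolding delta_def D_def[symmetric] by (intro Min_in) (auto simp: D_def)
  then show "delta x y \<in> {1..length x}" "x ! (delta x y - 1) \<noteq> y ! (delta x y - 1)"
    unfolding D_def by auto
  show "x ! i = y ! i" if "i < delta x y - 1"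
  proof (rule ccontr)
    assume "x ! i \<noteq> y ! i"
    with that \<open>delta x y \<in> D\<close> have "Suc i \<in> D"
      unfolding D_def by auto
    then have "delta x y \<le> Suc i"
      unfolding delta_def D_def[symmetric] by (simp add: D_def)
    with that show False
      by simp
  qed
qed

lemma delta_commute: "length x = length y \<Longrightarrow> delta x y = delta y x"
  unfolding delta_def by (intro arg_cong[where f = Min]) auto

lemma delta_append_Cons: "u \<noteq> v \<Longrightarrow> delta (a @ u # b) (a @ v # c) = Suc (length a)"
  unfolding delta_def
proof (rule Min_eqI)
  fix i assume "i \<in> {i \<in> {1..length (a @ u # b)}. (a @ u # b) ! (i - 1) \<noteq> (a @ v # c) ! (i - 1)}"
  then show "Suc (length a) \<le> i"
    by (cases "i - 1 < length a") (auto simp: nth_append)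
qed (auto simp: nth_append)

lemma finite_lists_length: "finite {xs :: bool list. length xs = n}"
  and card_lists_length: "card {xs :: bool list. length xs = n} = 2 ^ n"
  using finite_lists_length_eq[of "UNIV :: bool set" n] card_lists_length_eq[of "UNIV :: bool set" n]
  by simp_all

definition oriented_pairs :: "nat \<Rightarrow> (bool list \<times> bool list) set" where
  "oriented_pairs d = {(x, y). length x = d \<and> length y = d \<and> x \<noteq> y \<and> \<not> x ! (delta x y - 1)}"

lemma finite_oriented_pairs: "finite (oriented_pairs d)"
  by (rule finite_subset[OF _ finite_cartesian_product[OF finite_lists_length[of d] finite_lists_length[of d]]])
    (auto simp: oriented_pairs_def)

lemma swap_in_oriented_pairs_iff:
  assumes "length x = d" "length y = d" "x \<noteq> y"
  shows "(y, x) \<in> oriented_pairs d \<longleftrightarrow> (x, y) \<notin> oriented_pairs d"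
  using assms nth_delta_neq[of x y] delta_commute[of x y] by (auto simp: oriented_pairs_def)

definition level_pairs :: "nat \<Rightarrow> nat \<Rightarrow> (bool list \<times> bool list) set" where
  "level_pairs d l = {(x, y) \<in> oriented_pairs d. delta x y = l}"

lemma level_pairs_eq_image:
  assumes "1 \<le> l" "l \<le> d"
  shows "level_pairs d l = (\<lambda>(a, b, c). (a @ False # b, a @ True # c)) `
    ({a. length a = l - 1} \<times> {b. length b = d - l} \<times> {c. length c = d - l})"
    (is "_ = ?f ` ?X")
proof
  show "?f ` ?X \<subseteq> level_pairs d l"
    using assms by (auto simp: level_pairs_def oriented_pairs_def delta_append_Cons nth_append)
  show "level_pairs d l \<subseteq> ?f ` ?X"
  proof
    fix z assume "z \<in> level_pairs d l"
    then obtain x y where z: "z = (x, y)" "length x = d" "length y = d" "x \<noteq> y"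
      "\<not> x ! (l - 1)" "delta x y = l"
      unfolding level_pairs_def oriented_pairs_def by auto
    then have "y ! (l - 1)"
      using nth_delta_neq[of x y] by auto
    have "take (l - 1) y = take (l - 1) x"
      using z nth_eq_below_delta[of x y] by (intro nth_equalityI) auto
    then have "x = take (l - 1) x @ False # drop l x" "y = take (l - 1) x @ True # drop l y"
      using id_take_nth_drop[of "l - 1" x] id_take_nth_drop[of "l - 1" y] z \<open>y ! (l - 1)\<close> assms
      by auto
    moreover have "(take (l - 1) x, drop l x, drop l y) \<in> ?X"
      using z assms by auto
    ultimately show "z \<in> ?f ` ?X"
      unfolding z by (metis (no_types, lifting) case_prod_conv image_eqI)
  qed
qed

lemma card_level_pairs:
  assumes "1 \<le> l" "l \<le> d"
  shows "card (level_pairs d l) = 2 ^ (2 * d - l - 1)"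
proof -
  let ?f = "\<lambda>(a, b, c). (a @ False # b, a @ True # c)"
  let ?X = "{a :: bool list. length a = l - 1} \<times> {b. length b = d - l} \<times> {c. length c = d - l}"
  have "inj_on ?f ?X"
    by (auto simp: inj_on_def append_eq_append_conv)
  then have "card (level_pairs d l) = 2 ^ (l - 1) * (2 ^ (d - l) * 2 ^ (d - l))"
    unfolding level_pairs_eq_image[OF assms] by (simp add: card_image card_cartesian_product card_lists_length)
  also have "\<dots> = 2 ^ (2 * d - l - 1)"
    using assms by (simp flip: power_add)
  finally show ?thesis .
qed

lemma card_eq_sum_level_edges:
  assumes "finite E"
    and "\<forall>e\<in>E. \<exists>u v. e = {u, v} \<and> fst u \<noteq> fst v \<and> length (fst u) = d \<and> length (fst v) = d"
  shows "card E = (\<Sum>l\<in>{1..d}. level_edges l E)"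
proof -
  define L where "L l = {e \<in> E. \<exists>u v. e = {u, v} \<and> fst u \<noteq> fst v \<and> delta (fst u) (fst v) = l}" for l
  have "E = (\<Union>l\<in>{1..d}. L l)"
    using assms(2) delta_in_range by (fastforce simp: L_def)
  moreover have "L l \<inter> L l' = {}" if "l \<noteq> l'" for l l'
    using that assms(2) delta_commute by (fastforce simp: L_def doubleton_eq_iff)
  moreover have "finite (L l)" for l
    using assms(1) by (simp add: L_def)
  ultimately have "card E = (\<Sum>l\<in>{1..d}. card (L l))"
    by (simp add: card_UN_disjoint)
  then show ?thesis
    unfolding level_edges_def L_def .
qed

lemma edges_between_commute: "edges_between E P Q = edges_between E Q P"
proof -
  have "{e \<in> E. \<exists>u\<in>P. \<exists>v\<in>Q. e = {u, v}} = {e \<in> E. \<exists>u\<in>Q. \<exists>v\<in>P. e = {u, v}}"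
    by (auto simp: insert_commute)
  then show ?thesis
    unfolding edges_between_def by simp
qed

lemma
  assumes "P \<subseteq> block m x"
  shows card_block_slice: "card {i. (x, i) \<in> P} = card P"
    and block_slice_subset: "{i. (x, i) \<in> P} \<subseteq> {1..m}"
proof -
  have "P = Pair x ` {i. (x, i) \<in> P}"
    using assms by (auto simp: block_def)
  then show "card {i. (x, i) \<in> P} = card P"
    by (metis card_image inj_on_def prod.inject)
  show "{i. (x, i) \<in> P} \<subseteq> {1..m}"
    using assms by (auto simp: block_def)
qed

section \<open>The graph\<close>

definition adj_pairs :: "nat \<Rightarrow> nat \<Rightarrow> (nat \<times> nat) set" where
  "adj_pairs m k = {(i, j) \<in> {1..m} \<times> {1..m}. shift_adj (floorlog 2 m) k i j}"

definition cube_edge :: "(bool list \<times> bool list) \<times> nat \<times> nat \<Rightarrow> vert set" where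
  "cube_edge = (\<lambda>((x, y), i, j). {(x, i), (y, j)})"

definition cube_graph :: "nat \<Rightarrow> nat \<Rightarrow> vert set set" where
  "cube_graph m d = cube_edge ` Sigma (oriented_pairs d) (\<lambda>(x, y). adj_pairs m (d - delta x y))"

lemma card_filter_image: "inj_on f A \<Longrightarrow> card {e \<in> f ` A. P e} = card {a \<in> A. P (f a)}"
proof -
  assume "inj_on f A"
  have "{e \<in> f ` A. P e} = f ` {a \<in> A. P (f a)}"
    by auto
  then show ?thesis
    using \<open>inj_on f A\<close> by (simp add: card_image inj_on_subset)
qed

lemma inj_on_cube_edge: "inj_on cube_edge (oriented_pairs d \<times> UNIV)"
proof (rule inj_onI)
  fix z z' assume "z \<in> oriented_pairs d \<times> UNIV" "z' \<in> oriented_pairs d \<times> UNIV" "cube_edge z = cube_edge z'"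
  moreover obtain x y i j x' y' i' j' where "z = ((x, y), i, j)" "z' = ((x', y'), i', j')"
    by (metis prod.exhaust)
  ultimately show "z = z'"
    unfolding cube_edge_def using swap_in_oriented_pairs_iff
    by (auto simp: doubleton_eq_iff oriented_pairs_def)
qed

lemma cube_graph_is_graph: "is_graph_on (verts m d) (cube_graph m d)"
  unfolding is_graph_on_def cube_graph_def cube_edge_def
  by (force simp: verts_def oriented_pairs_def adj_pairs_def)

lemma finite_adj_pairs: "finite (adj_pairs m k)"
  by (rule finite_subset[of _ "{1..m} \<times> {1..m}"]) (auto simp: adj_pairs_def)

lemma finite_cube_graph: "finite (cube_graph m d)"
  unfolding cube_graph_def
  by (auto intro!: finite_imageI finite_SigmaI simp: finite_oriented_pairs finite_adj_pairs)

lemma level_edges_cube_graph: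
  "level_edges l (cube_graph m d) = card (level_pairs d l) * card (adj_pairs m (d - l))"
proof -
  let ?Z = "Sigma (oriented_pairs d) (\<lambda>(x, y). adj_pairs m (d - delta x y))"
  have level_iff: "(\<exists>u v. cube_edge ((x, y), i, j) = {u, v} \<and> fst u \<noteq> fst v \<and> delta (fst u) (fst v) = l)
      \<longleftrightarrow> delta x y = l" if "(x, y) \<in> oriented_pairs d" for x y i j
    using that delta_commute[of x y] by (auto simp: cube_edge_def doubleton_eq_iff oriented_pairs_def)
  have "{z \<in> ?Z. \<exists>u v. cube_edge z = {u, v} \<and> fst u \<noteq> fst v \<and> delta (fst u) (fst v) = l}
      = level_pairs d l \<times> adj_pairs m (d - l)"
  proof (rule set_eqI)
    fix z :: "(bool list \<times> bool list) \<times> nat \<times> nat"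
    obtain x y i j where z: "z = ((x, y), i, j)"
      by (metis prod.exhaust)
    show "z \<in> {z \<in> ?Z. \<exists>u v. cube_edge z = {u, v} \<and> fst u \<noteq> fst v \<and> delta (fst u) (fst v) = l}
        \<longleftrightarrow> z \<in> level_pairs d l \<times> adj_pairs m (d - l)"
    proof (cases "(x, y) \<in> oriented_pairs d")
      case True
      show ?thesis
        unfolding z mem_Collect_eq level_iff[OF True] by (auto simp: level_pairs_def)
    qed (auto simp: z level_pairs_def)
  qed
  moreover have "inj_on cube_edge ?Z"
    by (rule inj_on_subset[OF inj_on_cube_edge]) auto
  ultimately show ?thesis
    unfolding level_edges_def cube_graph_def by (simp add: card_filter_image card_cartesian_product)
qed

lemma edges_between_cube_graph:
  assumes "(x, y) \<in> oriented_pairs d" "P \<subseteq> block m x" "Q \<subseteq> block m y"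
  shows "edges_between (cube_graph m d) P Q
    = card {(i, j) \<in> {i. (x, i) \<in> P} \<times> {j. (y, j) \<in> Q}. shift_adj (floorlog 2 m) (d - delta x y) i j}"
    (is "_ = card ?T")
proof -
  let ?Z = "Sigma (oriented_pairs d) (\<lambda>(x, y). adj_pairs m (d - delta x y))"
  have endpoints: "(\<exists>u\<in>P. \<exists>v\<in>Q. cube_edge ((x', y'), i, j) = {u, v})
      \<longleftrightarrow> x' = x \<and> y' = y \<and> (x, i) \<in> P \<and> (y, j) \<in> Q"
    if "(x', y') \<in> oriented_pairs d" for x' y' i j
  proof
    assume "\<exists>u\<in>P. \<exists>v\<in>Q. cube_edge ((x', y'), i, j) = {u, v}"
    then obtain u v where uv: "u \<in> P" "v \<in> Q" "{(x', i), (y', j)} = {u, v}"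
      unfolding cube_edge_def by auto
    moreover have "fst u = x" "fst v = y"
      using uv assms(2,3) by (auto simp: block_def)
    moreover have "(x', y') \<noteq> (y, x)"
      using that assms(1) swap_in_oriented_pairs_iff[of x d y] by (auto simp: oriented_pairs_def)
    ultimately show "x' = x \<and> y' = y \<and> (x, i) \<in> P \<and> (y, j) \<in> Q"
      unfolding doubleton_eq_iff by auto
  qed (auto simp: cube_edge_def)
  have "{z \<in> ?Z. \<exists>u\<in>P. \<exists>v\<in>Q. cube_edge z = {u, v}} = Pair (x, y) ` ?T"
  proof (rule set_eqI)
    fix z :: "(bool list \<times> bool list) \<times> nat \<times> nat"
    obtain x' y' i j where z: "z = ((x', y'), i, j)"
      by (metis prod.exhaust)
    show "z \<in> {z \<in> ?Z. \<exists>u\<in>P. \<exists>v\<in>Q. cube_edge z = {u, v}} \<longleftrightarrow> z \<in> Pair (x, y) ` ?T"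
    proof (cases "(x', y') \<in> oriented_pairs d")
      case True
      show ?thesis
        unfolding z mem_Collect_eq endpoints[OF True] using assms
        by (auto simp: adj_pairs_def block_def)
    qed (use assms(1) z in auto)
  qed
  moreover have "inj_on cube_edge ?Z"
    by (rule inj_on_subset[OF inj_on_cube_edge]) auto
  ultimately show ?thesis
    unfolding edges_between_def cube_graph_def by (simp add: card_filter_image card_image inj_on_def)
qed

section \<open>Edge counts\<close>

lemma level_edges_cube_graph_bounds:
  fixes \<epsilon> :: real
  assumes "l \<in> {1..d}" "0 < m" "0 \<le> \<epsilon>" "2 ^ (3 * d + 1) \<le> \<epsilon>\<^sup>2 * real m"
  shows "(1 - \<epsilon>) * 2 ^ (d - 1) * real m ^ 2 \<le> real (level_edges l (cube_graph m d))
    \<and> real (level_edges l (cube_graph m d)) \<le> (1 + \<epsilon>) * 2 ^ (d - 1) * real m ^ 2"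
proof -
  define k where "k = d - l"
  define A where "A = real (card (adj_pairs m k))"
  have "adj_pairs m k = {(i, j) \<in> {1..m} \<times> {1..m}. shift_adj (floorlog 2 m) k i j}"
    unfolding adj_pairs_def ..
  moreover have "2 ^ (3 * d + 1) * real m \<le> \<epsilon>\<^sup>2 * (card {1..m} * card {1..m})"
    using assms(4) by (simp add: power2_eq_square mult_right_mono flip: mult.assoc)
  ultimately have "\<bar>A - real m ^ 2 / 2 ^ k\<bar> \<le> \<epsilon> * real m ^ 2 / 2 ^ k"
    unfolding A_def using card_shift_adj_approx[OF assms(2) order_refl order_refl _ assms(3), of k d]
    by (simp add: k_def power2_eq_square mult.assoc)
  then have "(1 - \<epsilon>) * real m ^ 2 \<le> 2 ^ k * A" "2 ^ k * A \<le> (1 + \<epsilon>) * real m ^ 2"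
    by (simp_all add: field_simps abs_le_iff)
  moreover have "card (level_pairs d l) = 2 ^ (d - 1) * 2 ^ k"
    using assms(1) card_level_pairs[of l d] unfolding k_def
    by (auto simp flip: power_add intro!: arg_cong[where f = "\<lambda>e. 2 ^ e"])
  then have "real (level_edges l (cube_graph m d)) = 2 ^ (d - 1) * (2 ^ k * A)"
    unfolding level_edges_cube_graph A_def k_def by simp
  ultimately show ?thesis
    by (simp add: mult.assoc)
qed

lemma card_cube_graph_bounds:
  fixes \<epsilon> :: real
  assumes "0 < m" "0 \<le> \<epsilon>" "2 ^ (3 * d + 1) \<le> \<epsilon>\<^sup>2 * real m"
  shows "(1 - \<epsilon>) * real d * 2 ^ (d - 1) * real m ^ 2 \<le> real (card (cube_graph m d))
    \<and> real (card (cube_graph m d)) \<le> (1 + \<epsilon>) * real d * 2 ^ (d - 1) * real m ^ 2"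
proof -
  have "\<forall>e\<in>cube_graph m d. \<exists>u v. e = {u, v} \<and> fst u \<noteq> fst v \<and> length (fst u) = d \<and> length (fst v) = d"
    by (force simp: cube_graph_def cube_edge_def oriented_pairs_def)
  then have "real (card (cube_graph m d)) = (\<Sum>l\<in>{1..d}. real (level_edges l (cube_graph m d)))"
    using card_eq_sum_level_edges[OF finite_cube_graph] by simp
  moreover have "(\<Sum>l\<in>{1..d}. (1 - \<epsilon>) * 2 ^ (d - 1) * real m ^ 2)
      \<le> (\<Sum>l\<in>{1..d}. real (level_edges l (cube_graph m d)))"
    by (rule sum_mono) (use level_edges_cube_graph_bounds[OF _ assms] in blast)
  moreover have "(\<Sum>l\<in>{1..d}. real (level_edges l (cube_graph m d)))
      \<le> (\<Sum>l\<in>{1..d}. (1 + \<epsilon>) * 2 ^ (d - 1) * real m ^ 2)"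
    by (rule sum_mono) (use level_edges_cube_graph_bounds[OF _ assms] in blast)
  ultimately show ?thesis
    by (simp add: mult_ac)
qed

lemma edges_between_cube_graph_le:
  fixes \<epsilon> :: real
  assumes "length x = d" "length y = d" "x \<noteq> y" "P \<subseteq> block m x" "Q \<subseteq> block m y"
    and "0 < m" "0 \<le> \<epsilon>" "2 ^ (3 * d + 1) * real m \<le> \<epsilon>\<^sup>2 * (real (card P) * real (card Q))"
  shows "real (edges_between (cube_graph m d) P Q)
    \<le> (1 + \<epsilon>) * 2 powr (real (delta x y) - real d) * card P * card Q"
proof -
  have oriented: "real (edges_between (cube_graph m d) P Q)
      \<le> (1 + \<epsilon>) * 2 powr (real (delta x y) - real d) * card P * card Q"
    if "(x, y) \<in> oriented_pairs d" "P \<subseteq> block m x" "Q \<subseteq> block m y"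
      "2 ^ (3 * d + 1) * real m \<le> \<epsilon>\<^sup>2 * (real (card P) * real (card Q))" for x y P Q
  proof -
    define k where "k = d - delta x y"
    have "delta x y \<le> d"
      using that(1) delta_in_range[of x y] by (auto simp: oriented_pairs_def)
    then have scale: "2 powr (real (delta x y) - real d) = 1 / 2 ^ k"
      unfolding k_def by (simp add: powr_diff powr_realpow power_diff)
    have "real (edges_between (cube_graph m d) P Q) \<le> card P * card Q / 2 ^ k + \<epsilon> * card P * card Q / 2 ^ k"
      using card_shift_adj_approx[OF assms(6) block_slice_subset[OF that(2)] block_slice_subset[OF that(3)] _ assms(7),
          of k d]
      unfolding edges_between_cube_graph[OF that(1-3)] card_block_slice[OF that(2)] card_block_slice[OF that(3)]
        k_def
      using that(4) by (simp add: abs_le_iff)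
    then show ?thesis
      unfolding scale by (simp add: field_simps)
  qed
  show ?thesis
  proof (cases "(x, y) \<in> oriented_pairs d")
    case False
    then have "(y, x) \<in> oriented_pairs d"
      using swap_in_oriented_pairs_iff assms(1-3) by blast
    then show ?thesis
      using oriented[of y x Q P] assms delta_commute[of x y]
      by (simp add: edges_between_commute mult_ac)
  qed (use oriented assms in blast)
qed

lemma mult_le_if_powr_bounds:
  fixes a b x C E :: real
  assumes "C \<le> E * x powr (1/3)" "x powr (2/3) \<le> a" "x powr (2/3) \<le> b" "0 \<le> E" "0 \<le> x"
  shows "C * x \<le> E * (a * b)"
proof -
  have "C * x \<le> E * (x powr (1/3) * x)"
    using mult_right_mono[OF assms(1,5)] by (simp add: mult_ac)
  also have "x powr (1/3) * x = x powr (2/3) * x powr (2/3)"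
    using powr_add[of x "1/3" 1] powr_add[of x "2/3" "2/3"] assms(5) by simp
  also have "E * \<dots> \<le> E * (a * b)"
    by (rule mult_left_mono[OF mult_mono[OF assms(2,3)]])
      (use assms(4) order_trans[OF powr_ge_zero assms(2)] in auto)
  finally show ?thesis .
qed

lemma ex_threshold_powr_one_third:
  fixes C E :: real
  assumes "0 < E"
  shows "\<exists>M. \<forall>m\<ge>M. 0 < m \<and> C \<le> E * real m \<and> C \<le> E * real m powr (1/3)"
proof -
  have "\<forall>\<^sub>F m in sequentially. C / E \<le> real m" "\<forall>\<^sub>F m in sequentially. C / E \<le> real m powr (1/3)"
    by real_asymp+
  moreover have "\<forall>\<^sub>F m in sequentially. 0 < m"
    by (rule eventually_gt_at_top)
  ultimately have "\<forall>\<^sub>F m in sequentially. 0 < m \<and> C \<le> E * real m \<and> C \<le> E * real m powr (1/3)"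
    by eventually_elim (use assms in \<open>simp add: field_simps\<close>)
  then show ?thesis
    unfolding eventually_sequentially .
qed

theorem proposition2p4:
  shows "\<exists>R :: nat \<Rightarrow> nat \<Rightarrow> vert set set.
    (\<forall>m d. is_graph_on (verts m d) (R m d)) \<and>
    (\<forall>d::nat. \<forall>\<epsilon>::real. \<epsilon> > 0 \<longrightarrow> (\<exists>M. \<forall>m\<ge>M.
      (\<forall>l\<in>{1..d}.
          (1 - \<epsilon>) * 2 ^ (d - 1) * real m ^ 2 \<le> real (level_edges l (R m d)) \<and>
          real (level_edges l (R m d)) \<le> (1 + \<epsilon>) * 2 ^ (d - 1) * real m ^ 2) \<and>
      (1 - \<epsilon>) * real d * 2 ^ (d - 1) * real m ^ 2 \<le> real (card (R m d)) \<and>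
      real (card (R m d)) \<le> (1 + \<epsilon>) * real d * 2 ^ (d - 1) * real m ^ 2 \<and>
      (\<forall>x y P Q. length x = d \<and> length y = d \<and> x \<noteq> y \<and>
          P \<subseteq> block m x \<and> Q \<subseteq> block m y \<and>
          real (card P) \<ge> real m powr (2/3) \<and> real (card Q) \<ge> real m powr (2/3) \<longrightarrow>
          real (edges_between (R m d) P Q)
            \<le> (1 + \<epsilon>) * 2 powr (real (delta x y) - real d) * real (card P) * real (card Q))))"
proof (intro exI[of _ cube_graph] conjI allI impI cube_graph_is_graph, goal_cases)
  case (1 d \<epsilon>)
  then obtain M where large:
    "0 < m \<and> 2 ^ (3 * d + 1) \<le> \<epsilon>\<^sup>2 * real m \<and> 2 ^ (3 * d + 1) \<le> \<epsilon>\<^sup>2 * real m powr (1/3)"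
    if "M \<le> m" for m
    using ex_threshold_powr_one_third[of "\<epsilon>\<^sup>2" "2 ^ (3 * d + 1)"] by auto
  show ?case
  proof (intro exI[of _ M] allI impI conjI ballI)
    fix m x y P Q
    assume "M \<le> m" and xyPQ: "length x = d \<and> length y = d \<and> x \<noteq> y \<and> P \<subseteq> block m x \<and> Q \<subseteq> block m y
      \<and> real m powr (2/3) \<le> real (card P) \<and> real m powr (2/3) \<le> real (card Q)"
    show "real (edges_between (cube_graph m d) P Q)
      \<le> (1 + \<epsilon>) * 2 powr (real (delta x y) - real d) * real (card P) * real (card Q)"
      using xyPQ large[OF \<open>M \<le> m\<close>] 1 by (intro edges_between_cube_graph_le mult_le_if_powr_bounds) auto
  qed (use large less_imp_le[OF 1] level_edges_cube_graph_bounds card_cube_graph_bounds in blast)+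
qed

end
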